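(* Let $X$ be a real random variable with $\mathbb{E}X^2<\infty$ and let $(X_{i,k})_{1\le i\le k}$ be a triangular array of i.i.d. random variables distributed as $X$. For $k\ge1$ set \[ \tilde T_k=\sum_{i=1}^k\Big(X_{i,k}\mathbf{1}_{\{|X_{i,k}|\le k\}}-\mathbb{E}\big[X_{i,k}\mathbf{1}_{\{|X_{i,k}|\le k\}}\big]\Big). \] Then for every $p>2$, \[ \mathbb{E}\sum_{k=1}^\infty\left(\frac{|\tilde T_k|}{k}\right)^p<\infty. \] *)

theory Defs
  imports "HOL-Probability.Probability"
begin

definition trunc_at :: "nat \<Rightarrow> real \<Rightarrow> real" where
  "trunc_at k x = (if \<bar>x\<bar> \<le> real k then x else 0)"

definition centered_trunc_sum ::
  "'a measure \<Rightarrow> (nat \<Rightarrow> nat \<Rightarrow> 'a \<Rightarrow> real) \<Rightarrow> nat \<Rightarrow> 'a \<Rightarrow> real" where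
  "centered_trunc_sum M Xa k \<omega> =
     (\<Sum>i=1..k. trunc_at k (Xa i k \<omega>) - (\<integral>\<eta>. trunc_at k (Xa i k \<eta>) \<partial>M))"

end

theory Submission
  imports Defs
begin

(* Let T_k be the centred truncated row sum.  Its summands
   Y_i = trunc_at k X_{i,k} - E(trunc_at k X_{i,k}) are independent, centred, bounded,
   have variance at most s2 = E X^2 and p-th absolute moment at most
   2^p (E |trunc_at k X|^p + s2^(p/2)).  A Rosenthal-type inequality gives
     E (|T_k| / k)^p <= K (k^(-p/2) s2^(p/2) + k^(1-p) 2^p (E |trunc_at k X|^p + s2^(p/2))),
   which is summable in k: the pure powers of k because p > 2, and the truncated
   moments because sum_k k^(1-p) |trunc_at k x|^p = O(1 + x^2) and E X^2 < infinity. *)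

lemma powr_diff_one_mult:
  fixes x q :: real
  assumes "0 \<le> x"
  shows "x powr (q - 1) * x = x powr q"
  using assms by (metis diff_add_cancel powr_add powr_one)

lemma powr_taylor_second_order:
  fixes a b p :: real
  assumes a: "a > 0" and b: "\<bar>b\<bar> \<le> a / 2" and "b \<noteq> 0"
  shows "\<exists>t. 0 < t \<and> t \<le> 2 * a \<and>
           (a + b) powr p = a powr p + p * a powr (p - 1) * b + p * (p - 1) / 2 * t powr (p - 2) * b\<^sup>2"
proof -
  define d :: "nat \<Rightarrow> real \<Rightarrow> real" where
    "d = (\<lambda>m x. if m = 0 then x powr p else if m = 1 then p * x powr (p - 1)
                else p * (p - 1) * x powr (p - 2))"
  have deriv: "\<forall>m t. m < 2 \<and> a / 2 \<le> t \<and> t \<le> 3 * a / 2 \<longrightarrow> DERIV (d m) t :> d (Suc m) t"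
  proof (intro allI impI)
    fix m :: nat and t assume "m < 2 \<and> a / 2 \<le> t \<and> t \<le> 3 * a / 2"
    then have "t > 0" "m = 0 \<or> m = 1" using a by auto
    then show "DERIV (d m) t :> d (Suc m) t"
      by (auto simp: d_def algebra_simps intro!: derivative_eq_intros)
  qed
  have "a / 2 \<le> a + b" "a + b \<le> 3 * a / 2" using b by (auto simp: abs_le_iff)
  then obtain t where t: "if a + b < a then a + b < t \<and> t < a else a < t \<and> t < a + b"
    and eq: "d 0 (a + b) = (\<Sum>m<2. d m a / fact m * (a + b - a) ^ m) + d 2 t / fact 2 * (a + b - a)\<^sup>2"
    using Taylor[of 2 d "d 0" "a / 2" "3 * a / 2" a "a + b", OF _ refl deriv] a \<open>b \<noteq> 0\<close> by auto
  have "0 < t" "t \<le> 2 * a" using t a b by (auto split: if_splits)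
  moreover have "(a + b) powr p = a powr p + p * a powr (p - 1) * b + p * (p - 1) / 2 * t powr (p - 2) * b\<^sup>2"
    using eq by (simp add: d_def numeral_2_eq_2 lessThan_Suc fact_numeral)
  ultimately show ?thesis by blast
qed

lemma powr_add_upper_near:
  fixes a b p :: real
  assumes p: "p \<ge> 2" and a: "a > 0" and b: "\<bar>b\<bar> \<le> a / 2"
  shows "(a + b) powr p \<le> a powr p + p * a powr (p - 1) * b + p * p * 2 powr p * a powr (p - 2) * b\<^sup>2"
proof (cases "b = 0")
  case False
  then obtain t where t: "0 < t" "t \<le> 2 * a"
    and eq: "(a + b) powr p = a powr p + p * a powr (p - 1) * b + p * (p - 1) / 2 * t powr (p - 2) * b\<^sup>2"
    using powr_taylor_second_order[OF a b] by blast
  have "t powr (p - 2) \<le> (2 * a) powr (p - 2)" using t p by (intro powr_mono2) auto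
  also have "\<dots> = 2 powr (p - 2) * a powr (p - 2)" using a by (simp add: powr_mult)
  also have "\<dots> \<le> 2 powr p * a powr (p - 2)" by (intro mult_right_mono powr_mono) auto
  finally have "t powr (p - 2) \<le> 2 powr p * a powr (p - 2)" .
  moreover have "p * (p - 1) / 2 \<le> p * p" "0 \<le> p * (p - 1) / 2" using p by auto
  ultimately have "p * (p - 1) / 2 * t powr (p - 2) \<le> p * p * (2 powr p * a powr (p - 2))"
    by (intro mult_mono) auto
  then have "p * (p - 1) / 2 * t powr (p - 2) * b\<^sup>2 \<le> p * p * 2 powr p * a powr (p - 2) * b\<^sup>2"
    by (intro mult_right_mono) (auto simp: mult.assoc)
  then show ?thesis using eq by linarith
qed simp

lemma abs_powr_add_upper_near:
  fixes a b p :: real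
  assumes p: "p \<ge> 2" and ab: "\<bar>b\<bar> \<le> \<bar>a\<bar> / 2" and "a \<noteq> 0"
  shows "\<bar>a + b\<bar> powr p \<le> \<bar>a\<bar> powr p + p * \<bar>a\<bar> powr (p - 2) * a * b
           + p * p * 2 powr p * \<bar>a\<bar> powr (p - 2) * b\<^sup>2"
proof -
  have lin: "\<bar>a\<bar> powr (p - 1) = \<bar>a\<bar> powr (p - 2) * \<bar>a\<bar>"
    using powr_diff_one_mult[of "\<bar>a\<bar>" "p - 1"] by simp
  show ?thesis
  proof (cases "a > 0")
    case True
    then have "\<bar>a + b\<bar> = a + b" using ab by auto
    then show ?thesis using powr_add_upper_near[OF p True, of b] ab True lin
      by (simp add: mult.assoc)
  next
    case False
    then have an: "-a > 0" using \<open>a \<noteq> 0\<close> by auto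
    then have "\<bar>a + b\<bar> = (-a) + (-b)" using ab by auto
    then show ?thesis using powr_add_upper_near[OF p an, of "-b"] ab an lin
      by (simp add: mult.assoc)
  qed
qed

lemma abs_powr_add_upper_far:
  fixes a b p :: real
  assumes p: "p \<ge> 2" and ab: "\<bar>a\<bar> \<le> 2 * \<bar>b\<bar>"
  shows "\<bar>a + b\<bar> powr p \<le> \<bar>a\<bar> powr p + p * \<bar>a\<bar> powr (p - 2) * a * b
           + (3 powr p + p * 2 powr p) * \<bar>b\<bar> powr p"
proof -
  have "\<bar>a + b\<bar> powr p \<le> (3 * \<bar>b\<bar>) powr p" using ab p by (intro powr_mono2) auto
  then have main: "\<bar>a + b\<bar> powr p \<le> 3 powr p * \<bar>b\<bar> powr p" by (simp add: powr_mult)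
  have "\<bar>\<bar>a\<bar> powr (p - 2) * a * b\<bar> = \<bar>a\<bar> powr (p - 1) * \<bar>b\<bar>"
    using powr_diff_one_mult[of "\<bar>a\<bar>" "p - 1"] by (simp add: abs_mult)
  also have "\<dots> \<le> (2 * \<bar>b\<bar>) powr (p - 1) * \<bar>b\<bar>"
    using ab p by (intro mult_right_mono powr_mono2) auto
  also have "\<dots> = 2 powr (p - 1) * \<bar>b\<bar> powr p"
    by (simp add: powr_mult powr_diff_one_mult mult.assoc)
  also have "\<dots> \<le> 2 powr p * \<bar>b\<bar> powr p" by (intro mult_right_mono powr_mono) auto
  finally have "- (\<bar>a\<bar> powr (p - 2) * a * b) \<le> 2 powr p * \<bar>b\<bar> powr p" by linarith
  from mult_left_mono[OF this, of p] p
  have "- (p * (\<bar>a\<bar> powr (p - 2) * a * b)) \<le> p * (2 powr p * \<bar>b\<bar> powr p)" by simp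
  moreover have "(3 powr p + p * 2 powr p) * \<bar>b\<bar> powr p = 3 powr p * \<bar>b\<bar> powr p + p * (2 powr p * \<bar>b\<bar> powr p)"
    by (simp add: algebra_simps)
  ultimately show ?thesis using main powr_ge_zero[of "\<bar>a\<bar>" p] by (simp only: mult.assoc)
qed

definition expansion_const :: "real \<Rightarrow> real" where
  "expansion_const p = p * p * 2 powr p + 3 powr p + p * 2 powr p"

lemma expansion_const_nonneg: "p \<ge> 0 \<Longrightarrow> expansion_const p \<ge> 0"
  unfolding expansion_const_def by (intro add_nonneg_nonneg mult_nonneg_nonneg) auto

text \<open>The pointwise inequality behind the moment recursion: \<open>|a + b| powr p\<close> is at
  most its value at \<open>b = 0\<close>, a term linear in \<open>b\<close> (which vanishes in expectation when
  \<open>b\<close> is an independent centred increment), and quadratic and \<open>p\<close>-th order remainders.\<close>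
lemma abs_powr_add_expansion:
  fixes a b p :: real
  assumes p: "p \<ge> 2"
  shows "\<bar>a + b\<bar> powr p \<le> \<bar>a\<bar> powr p + p * \<bar>a\<bar> powr (p - 2) * a * b
          + expansion_const p * (\<bar>a\<bar> powr (p - 2) * b\<^sup>2 + \<bar>b\<bar> powr p)"
proof -
  have nonneg: "0 \<le> \<bar>a\<bar> powr (p - 2) * b\<^sup>2" "0 \<le> \<bar>b\<bar> powr p" by auto
  show ?thesis
  proof (cases "\<bar>b\<bar> \<le> \<bar>a\<bar> / 2 \<and> a \<noteq> 0")
    case True
    have "p * p * 2 powr p * (\<bar>a\<bar> powr (p - 2) * b\<^sup>2)
          \<le> expansion_const p * (\<bar>a\<bar> powr (p - 2) * b\<^sup>2 + \<bar>b\<bar> powr p)"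
      using p nonneg unfolding expansion_const_def
      by (intro mult_mono) (auto intro!: add_nonneg_nonneg)
    then show ?thesis using abs_powr_add_upper_near[OF p conjunct1[OF True] conjunct2[OF True]] by (simp only: mult.assoc)
  next
    case False
    then have "\<bar>a\<bar> \<le> 2 * \<bar>b\<bar>" by auto
    moreover have "(3 powr p + p * 2 powr p) * \<bar>b\<bar> powr p
          \<le> expansion_const p * (\<bar>a\<bar> powr (p - 2) * b\<^sup>2 + \<bar>b\<bar> powr p)"
      using p nonneg unfolding expansion_const_def
      by (intro mult_mono) (auto intro!: add_nonneg_nonneg)
    ultimately show ?thesis using abs_powr_add_upper_far[OF p, of a b] by linarith
  qed
qed

text \<open>A consequence of Young's inequality with exponents \<open>p / (p - 2)\<close> and \<open>p / 2\<close>: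
  the mixed term \<open>u powr (p - 2) * s\<close> is split into \<open>u powr p\<close> with a small weight
  \<open>1 / n\<close> and \<open>s powr (p / 2)\<close> with the compensating weight \<open>n powr (p / 2 - 1)\<close>.\<close>
lemma powr_young_split:
  fixes u s n p :: real
  assumes p: "p > 2" and u: "u \<ge> 0" and s: "s \<ge> 0" and n: "n > 0"
  shows "u powr (p - 2) * s \<le> u powr p / n + n powr (p / 2 - 1) * s powr (p / 2)"
proof -
  define P where "P = p / (p - 2)"
  define Q where "Q = p / 2"
  define a where "a = u powr (p - 2) * n powr (- (p - 2) / p)"
  define b where "b = s * n powr ((p - 2) / p)"
  have P1: "P > 1" and Q1: "Q > 1" and PQ: "1 / P + 1 / Q = 1"
    using p by (simp_all add: P_def Q_def field_simps)
  have "a * b = u powr (p - 2) * s * (n powr (- (p - 2) / p) * n powr ((p - 2) / p))"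
    by (simp add: a_def b_def algebra_simps)
  also have "n powr (- (p - 2) / p) * n powr ((p - 2) / p) = 1"
    using n by (simp add: powr_add[symmetric] add_divide_distrib[symmetric])
  finally have ab: "a * b = u powr (p - 2) * s" by simp
  have aP: "a powr P = u powr p / n"
  proof -
    have e: "(2 - p) / (p - 2) = -1" "(p - 2) * (p / (p - 2)) = p" using p by (simp_all add: field_simps)
    have "a powr P = (u powr (p - 2)) powr P * (n powr (- (p - 2) / p)) powr P"
      unfolding a_def using u n by (simp add: powr_mult)
    also have "\<dots> = u powr p * n powr (-1)" using p by (simp add: powr_powr P_def e)
    finally show ?thesis using n by (simp add: powr_minus divide_inverse)
  qed
  have bQ: "b powr Q = n powr (p / 2 - 1) * s powr (p / 2)"
  proof -
    have e: "(p - 2) / p * (p / 2) = p / 2 - 1" using p by (simp add: field_simps)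
    have "b powr Q = s powr Q * (n powr ((p - 2) / p)) powr Q"
      unfolding b_def using s n by (simp add: powr_mult)
    also have "(n powr ((p - 2) / p)) powr Q = n powr (p / 2 - 1)" unfolding powr_powr Q_def e ..
    finally show ?thesis by (simp add: Q_def)
  qed
  have "a * b \<le> a powr P / P + b powr Q / Q"
    using Youngs_inequality[OF P1 Q1 PQ] u s n by (simp add: a_def b_def)
  also have "\<dots> \<le> a powr P + b powr Q"
    using P1 Q1 by (intro add_mono) (simp_all add: divide_le_eq mult_le_cancel_left1)
  finally show ?thesis using ab aP bQ by simp
qed

lemma abs_diff_powr_le:
  fixes a b p :: real
  assumes "p \<ge> 0"
  shows "\<bar>a - b\<bar> powr p \<le> 2 powr p * (\<bar>a\<bar> powr p + \<bar>b\<bar> powr p)"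
proof -
  have "\<bar>a - b\<bar> powr p \<le> (2 * max \<bar>a\<bar> \<bar>b\<bar>) powr p" using assms by (intro powr_mono2) auto
  also have "\<dots> = 2 powr p * max \<bar>a\<bar> \<bar>b\<bar> powr p" by (simp add: powr_mult)
  also have "max \<bar>a\<bar> \<bar>b\<bar> powr p \<le> \<bar>a\<bar> powr p + \<bar>b\<bar> powr p" by (simp add: max_def)
  finally show ?thesis by simp
qed

lemma linear_recurrence_bound:
  fixes A :: "nat \<Rightarrow> real" and q D :: real and n :: nat
  assumes A0: "A 0 \<le> 0" and q: "q \<ge> 1" and D: "D \<ge> 0"
    and step: "\<And>j. j < n \<Longrightarrow> A (Suc j) \<le> q * A j + D"
  shows "A n \<le> q ^ n * real n * D"
proof -
  have "A j \<le> q ^ j * real j * D" if "j \<le> n" for j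
    using that
  proof (induction j)
    case 0
    then show ?case using A0 by simp
  next
    case (Suc j)
    have "A j \<le> q ^ j * real j * D" using Suc by simp
    then have "q * A j \<le> q * (q ^ j * real j * D)" using q by (intro mult_left_mono) auto
    moreover have "A (Suc j) \<le> q * A j + D" using step Suc.prems by simp
    ultimately have "A (Suc j) \<le> q * (q ^ j * real j * D) + D" by linarith
    also have "\<dots> \<le> q ^ Suc j * real (Suc j) * D"
    proof -
      have "D \<le> q ^ Suc j * D" using mult_right_mono[OF one_le_power[OF q, of "Suc j"] D] by simp
      then show ?thesis by (simp add: algebra_simps)
    qed
    finally show ?case .
  qed
  then show ?thesis by simp
qed

lemma (in finite_measure) integrable_bounded_comp:
  fixes Z :: "'a \<Rightarrow> real" and g :: "real \<Rightarrow> real" and K C :: real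
  assumes "Z \<in> borel_measurable M" "\<And>\<omega>. \<omega> \<in> space M \<Longrightarrow> \<bar>Z \<omega>\<bar> \<le> K"
    and "g \<in> borel_measurable borel" "\<And>y. \<bar>y\<bar> \<le> K \<Longrightarrow> \<bar>g y\<bar> \<le> C"
  shows "integrable M (\<lambda>\<omega>. g (Z \<omega>))"
  using assms by (intro integrable_const_bound[where B = C]) auto

text \<open>Taking expectations in \<open>abs_powr_add_expansion\<close> for an independent, bounded,
  centred increment \<open>Y\<close>: the linear term vanishes and the quadratic term factorises.\<close>
lemma (in prob_space) moment_increment_expansion:
  fixes S Y :: "'a \<Rightarrow> real" and p K B :: real
  assumes p: "p \<ge> 2"
    and S[measurable]: "S \<in> borel_measurable M" and SK: "\<And>\<omega>. \<omega> \<in> space M \<Longrightarrow> \<bar>S \<omega>\<bar> \<le> K"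
    and Y[measurable]: "Y \<in> borel_measurable M" and YB: "\<And>\<omega>. \<omega> \<in> space M \<Longrightarrow> \<bar>Y \<omega>\<bar> \<le> B"
    and indep: "indep_var borel S borel Y" and mean: "expectation Y = 0"
  shows "expectation (\<lambda>\<omega>. \<bar>S \<omega> + Y \<omega>\<bar> powr p)
           \<le> expectation (\<lambda>\<omega>. \<bar>S \<omega>\<bar> powr p)
             + expansion_const p * (expectation (\<lambda>\<omega>. \<bar>S \<omega>\<bar> powr (p - 2)) * expectation (\<lambda>\<omega>. (Y \<omega>)\<^sup>2)
                                    + expectation (\<lambda>\<omega>. \<bar>Y \<omega>\<bar> powr p))"
proof -
  define c where "c = expansion_const p"
  define g1 where "g1 x = \<bar>x\<bar> powr (p - 2) * x" for x :: real
  define g2 where "g2 x = \<bar>x\<bar> powr (p - 2)" for x :: real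
  have [measurable]: "g1 \<in> borel_measurable borel" "g2 \<in> borel_measurable borel"
    unfolding g1_def g2_def by measurable
  have powr_bound: "\<bar>\<bar>y\<bar> powr r\<bar> \<le> C powr r" if "\<bar>y\<bar> \<le> C" "r \<ge> 0" for y C r :: real
    using that by (auto intro!: powr_mono2)
  have int_g1: "integrable M (\<lambda>\<omega>. g1 (S \<omega>))"
    by (rule integrable_bounded_comp[OF S SK, where C = "K powr (p - 2) * K"])
       (use p in \<open>auto simp: g1_def abs_mult intro!: mult_mono powr_mono2\<close>)
  have int_g2: "integrable M (\<lambda>\<omega>. g2 (S \<omega>))"
    by (rule integrable_bounded_comp[OF S SK, where C = "K powr (p - 2)"]) (use p powr_bound in \<open>auto simp: g2_def\<close>)
  have int_Sp: "integrable M (\<lambda>\<omega>. \<bar>S \<omega>\<bar> powr p)"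
    by (rule integrable_bounded_comp[OF S SK, where C = "K powr p"]) (use p powr_bound in auto)
  have int_Y: "integrable M (\<lambda>\<omega>. Y \<omega>)"
    by (rule integrable_bounded_comp[OF Y YB, where C = B]) auto
  have int_Y2: "integrable M (\<lambda>\<omega>. (Y \<omega>)\<^sup>2)"
    by (rule integrable_bounded_comp[OF Y YB, where C = "B\<^sup>2"])
       (auto simp: abs_le_square_iff[symmetric] intro: order_trans[OF _ abs_ge_self])
  have int_Yp: "integrable M (\<lambda>\<omega>. \<bar>Y \<omega>\<bar> powr p)"
    by (rule integrable_bounded_comp[OF Y YB, where C = "B powr p"]) (use p powr_bound in auto)
  have int_SYp: "integrable M (\<lambda>\<omega>. \<bar>S \<omega> + Y \<omega>\<bar> powr p)"
    by (rule integrable_bounded_comp[where Z = "\<lambda>\<omega>. S \<omega> + Y \<omega>" and K = "K + B" and C = "(K + B) powr p"])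
       (use p SK YB powr_bound in \<open>auto intro!: abs_triangle_ineq[THEN order_trans] add_mono\<close>)
  have I1: "indep_var borel (g1 \<circ> S) borel ((\<lambda>y. y) \<circ> Y)"
    and I2: "indep_var borel (g2 \<circ> S) borel ((\<lambda>y. y\<^sup>2) \<circ> Y)"
    by (rule indep_var_compose[OF indep]; simp)+
  have int1: "integrable M (\<lambda>\<omega>. g1 (S \<omega>) * Y \<omega>)"
    and E1: "expectation (\<lambda>\<omega>. g1 (S \<omega>) * Y \<omega>) = 0"
    using indep_var_integrable[OF I1] indep_var_lebesgue_integral[OF I1] int_g1 int_Y mean
    by (simp_all add: comp_def)
  have int2: "integrable M (\<lambda>\<omega>. g2 (S \<omega>) * (Y \<omega>)\<^sup>2)"
    and E2: "expectation (\<lambda>\<omega>. g2 (S \<omega>) * (Y \<omega>)\<^sup>2)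
               = expectation (\<lambda>\<omega>. g2 (S \<omega>)) * expectation (\<lambda>\<omega>. (Y \<omega>)\<^sup>2)"
    using indep_var_integrable[OF I2] indep_var_lebesgue_integral[OF I2] int_g2 int_Y2
    by (simp_all add: comp_def)
  have pointwise: "\<bar>S \<omega> + Y \<omega>\<bar> powr p \<le> \<bar>S \<omega>\<bar> powr p + p * (g1 (S \<omega>) * Y \<omega>)
          + c * (g2 (S \<omega>) * (Y \<omega>)\<^sup>2 + \<bar>Y \<omega>\<bar> powr p)" for \<omega>
    using abs_powr_add_expansion[OF p, of "S \<omega>" "Y \<omega>"]
    unfolding g1_def g2_def c_def by (simp add: mult.assoc)
  have "expectation (\<lambda>\<omega>. \<bar>S \<omega> + Y \<omega>\<bar> powr p)
        \<le> expectation (\<lambda>\<omega>. \<bar>S \<omega>\<bar> powr p + p * (g1 (S \<omega>) * Y \<omega>)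
             + c * (g2 (S \<omega>) * (Y \<omega>)\<^sup>2 + \<bar>Y \<omega>\<bar> powr p))"
    using int_SYp int_Sp int1 int2 int_Yp pointwise by (intro integral_mono) auto
  also have "\<dots> = expectation (\<lambda>\<omega>. \<bar>S \<omega>\<bar> powr p)
       + c * (expectation (\<lambda>\<omega>. g2 (S \<omega>)) * expectation (\<lambda>\<omega>. (Y \<omega>)\<^sup>2)
              + expectation (\<lambda>\<omega>. \<bar>Y \<omega>\<bar> powr p))"
    using int_Sp int1 int2 int_Yp E1 E2 by simp
  finally show ?thesis unfolding c_def g2_def .
qed

text \<open>The mixed term of
  \<open>moment_increment_expansion\<close> is split by \<open>powr_young_split\<close>.\<close>
lemma (in prob_space) moment_increment_bound:
  fixes S Y :: "'a \<Rightarrow> real" and p K B s2 mu n :: real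
  assumes p: "p > 2" and n: "n > 0"
    and S[measurable]: "S \<in> borel_measurable M" and SK: "\<And>\<omega>. \<omega> \<in> space M \<Longrightarrow> \<bar>S \<omega>\<bar> \<le> K"
    and Y[measurable]: "Y \<in> borel_measurable M" and YB: "\<And>\<omega>. \<omega> \<in> space M \<Longrightarrow> \<bar>Y \<omega>\<bar> \<le> B"
    and indep: "indep_var borel S borel Y"
    and mean: "expectation Y = 0"
    and var: "expectation (\<lambda>\<omega>. (Y \<omega>)\<^sup>2) \<le> s2"
    and mom: "expectation (\<lambda>\<omega>. \<bar>Y \<omega>\<bar> powr p) \<le> mu"
  shows "expectation (\<lambda>\<omega>. \<bar>S \<omega> + Y \<omega>\<bar> powr p)
           \<le> (1 + expansion_const p / n) * expectation (\<lambda>\<omega>. \<bar>S \<omega>\<bar> powr p)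
             + expansion_const p * (n powr (p / 2 - 1) * s2 powr (p / 2) + mu)"
proof -
  define c where "c = expansion_const p"
  define A where "A = expectation (\<lambda>\<omega>. \<bar>S \<omega>\<bar> powr p)"
  have c0: "c \<ge> 0" unfolding c_def using p by (intro expansion_const_nonneg) auto
  have "0 \<le> expectation (\<lambda>\<omega>. (Y \<omega>)\<^sup>2)" by (intro integral_nonneg_AE) auto
  then have s2: "s2 \<ge> 0" using var by linarith
  have int: "integrable M (\<lambda>\<omega>. \<bar>S \<omega>\<bar> powr r)" if "r \<ge> 0" for r
    using that by (intro integrable_bounded_comp[OF S SK, where C = "K powr r"]) (auto intro!: powr_mono2)
  have "expectation (\<lambda>\<omega>. \<bar>S \<omega>\<bar> powr (p - 2)) * expectation (\<lambda>\<omega>. (Y \<omega>)\<^sup>2)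
      \<le> expectation (\<lambda>\<omega>. \<bar>S \<omega>\<bar> powr (p - 2) * s2)"
    using var by (auto intro!: mult_left_mono integral_nonneg_AE)
  also have "\<dots> \<le> expectation (\<lambda>\<omega>. \<bar>S \<omega>\<bar> powr p / n + n powr (p / 2 - 1) * s2 powr (p / 2))"
    using int p n s2 by (intro integral_mono powr_young_split) auto
  also have "\<dots> = A / n + n powr (p / 2 - 1) * s2 powr (p / 2)"
    using int[of p] p by (simp add: A_def prob_space)
  finally have "expectation (\<lambda>\<omega>. \<bar>S \<omega>\<bar> powr (p - 2)) * expectation (\<lambda>\<omega>. (Y \<omega>)\<^sup>2)
                  + expectation (\<lambda>\<omega>. \<bar>Y \<omega>\<bar> powr p)
                \<le> A / n + (n powr (p / 2 - 1) * s2 powr (p / 2) + mu)"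
    using mom by linarith
  from mult_left_mono[OF this c0]
    moment_increment_expansion[OF less_imp_le[OF p] S SK Y YB indep mean]
  show ?thesis unfolding c_def[symmetric] A_def[symmetric] by (simp add: algebra_simps)
qed

text \<open>Iterating
  \<open>moment_increment_bound\<close> \<open>n\<close> times costs the factor \<open>(1 + c / n) ^ n \<le> exp c\<close>.\<close>
lemma (in prob_space) rosenthal_bounded:
  fixes Y :: "nat \<Rightarrow> 'a \<Rightarrow> real" and p B s2 mu :: real and n :: nat
  assumes p: "p > 2" and n: "n > 0"
    and meas: "\<And>i. i < n \<Longrightarrow> Y i \<in> borel_measurable M"
    and bnd: "\<And>i \<omega>. i < n \<Longrightarrow> \<omega> \<in> space M \<Longrightarrow> \<bar>Y i \<omega>\<bar> \<le> B"
    and indep: "\<And>j. j < n \<Longrightarrow> indep_var borel (\<lambda>\<omega>. \<Sum>i<j. Y i \<omega>) borel (Y j)"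
    and mean: "\<And>i. i < n \<Longrightarrow> expectation (Y i) = 0"
    and var: "\<And>i. i < n \<Longrightarrow> expectation (\<lambda>\<omega>. (Y i \<omega>)\<^sup>2) \<le> s2"
    and mom: "\<And>i. i < n \<Longrightarrow> expectation (\<lambda>\<omega>. \<bar>Y i \<omega>\<bar> powr p) \<le> mu"
  shows "expectation (\<lambda>\<omega>. \<bar>\<Sum>i<n. Y i \<omega>\<bar> powr p)
           \<le> expansion_const p * exp (expansion_const p) * (real n powr (p / 2) * s2 powr (p / 2) + real n * mu)"
proof -
  define c where "c = expansion_const p"
  define D where "D = c * (real n powr (p / 2 - 1) * s2 powr (p / 2) + mu)"
  define A where "A j = expectation (\<lambda>\<omega>. \<bar>\<Sum>i<j. Y i \<omega>\<bar> powr p)" for j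
  have c0: "c \<ge> 0" unfolding c_def using p by (intro expansion_const_nonneg) auto
  have "0 \<le> expectation (\<lambda>\<omega>. \<bar>Y 0 \<omega>\<bar> powr p)" by (intro integral_nonneg_AE) auto
  then have "mu \<ge> 0" using mom[OF n] by linarith
  then have D0: "D \<ge> 0" unfolding D_def using c0 by (intro mult_nonneg_nonneg add_nonneg_nonneg) auto
  have "A (Suc j) \<le> (1 + c / real n) * A j + D" if j: "j < n" for j
  proof -
    have "\<bar>\<Sum>i<j. Y i \<omega>\<bar> \<le> real j * B" if "\<omega> \<in> space M" for \<omega>
    proof -
      have "\<bar>\<Sum>i<j. Y i \<omega>\<bar> \<le> (\<Sum>i<j. \<bar>Y i \<omega>\<bar>)" by (rule sum_abs)
      also have "\<dots> \<le> (\<Sum>i<j. B)" using bnd j that by (intro sum_mono) auto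
      finally show ?thesis by simp
    qed
    from moment_increment_bound[OF p _ _ this meas[OF j] bnd[OF j] indep[OF j] mean[OF j] var[OF j] mom[OF j]]
    show ?thesis using n meas j by (simp add: A_def D_def c_def)
  qed
  then have "A n \<le> (1 + c / real n) ^ n * real n * D"
    using c0 D0 by (intro linear_recurrence_bound) (auto simp: A_def)
  also have "\<dots> \<le> exp c * (real n * D)"
    using c0 n D0 exp_ge_one_plus_x_over_n_power_n[where x = c and n = n] by (simp add: mult.assoc mult_right_mono)
  also have "real n * D = c * (real n powr (p / 2) * s2 powr (p / 2) + real n * mu)"
    using powr_diff_one_mult[of "real n" "p / 2"] unfolding D_def by (simp add: algebra_simps)
  finally show ?thesis unfolding A_def c_def by (simp add: mult_ac)
qed

lemma neg_powr_tangent_bound: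
  fixes a k q :: real
  assumes a: "0 < a" and ak: "a < k" and q: "q > 0"
  shows "k powr (-q) + q * k powr (-q - 1) * (k - a) \<le> a powr (-q)"
proof -
  define h where "h = (k - a) / k"
  have k: "k > 0" using a ak by simp
  have h: "0 < h" "h < 1" using a ak k by (auto simp: h_def field_simps)
  have "q * h \<le> - q * ln (1 - h)"
    using mult_left_mono[OF ln_le_minus_one[of "1 - h"], of q] h q by simp
  then have "1 + q * h \<le> exp (- q * ln (1 - h))"
    using exp_ge_add_one_self[of "- q * ln (1 - h)"] by linarith
  also have "\<dots> = (1 - h) powr (-q)" using h by (simp add: powr_def)
  finally have "k powr (-q) * (1 + q * h) \<le> k powr (-q) * (1 - h) powr (-q)"
    by (intro mult_left_mono) auto
  also have "\<dots> = a powr (-q)"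
    using k h by (simp add: powr_mult[symmetric] h_def field_simps)
  also have "k powr (-q) * (1 + q * h) = k powr (-q) + q * k powr (-q - 1) * (k - a)"
    using k by (simp add: h_def powr_diff field_simps)
  finally show ?thesis .
qed

text \<open>Each term of the series \<open>\<Sum>k. k powr (1 - p) * |trunc_at k x| powr p\<close> is dominated
  by an increment of the telescoping sequence \<open>\<psi>\<close>; only the terms with \<open>k \<ge> |x|\<close>
  are nonzero, and there \<open>k powr (1 - p)\<close> is compared with the decrease of
  \<open>max j (y / 4) powr (2 - p)\<close> by \<open>neg_powr_tangent_bound\<close>.\<close>
lemma trunc_tail_term_bound:
  fixes x p :: real and n :: nat
  assumes p: "p > 2"
  defines "y \<equiv> max \<bar>x\<bar> 1"
  defines "\<psi> \<equiv> \<lambda>j::nat. max (real j) (y / 4) powr (2 - p)"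
  shows "real (Suc n) powr (1 - p) * \<bar>trunc_at (Suc n) x\<bar> powr p
           \<le> 4 / (3 * (p - 2)) * y powr p * (\<psi> n - \<psi> (Suc n))"
proof -
  define c where "c = 4 / (3 * (p - 2))"
  have c0: "c > 0" using p by (simp add: c_def)
  have y1: "y \<ge> 1" by (simp add: y_def)
  have antitone: "\<psi> (Suc n) \<le> \<psi> n"
    unfolding \<psi>_def using p y1 by (intro powr_mono2') auto
  show ?thesis
  proof (cases "\<bar>x\<bar> \<le> real (Suc n)")
    case False
    then show ?thesis using antitone c0 p by (simp add: trunc_at_def c_def)
  next
    case True
    define k where "k = real (Suc n)"
    define a where "a = max (real n) (y / 4)"
    have yk: "y \<le> k" using True by (simp add: y_def k_def)
    have a0: "0 < a" and ak: "a < k" using yk y1 by (auto simp: a_def k_def)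
    have gap: "3 / 4 \<le> k - a"
      using yk by (cases "n = 0") (auto simp: a_def k_def y_def)
    define q where "q = p - 2"
    have q: "q > 0" and exps: "1 - p = -q - 1" "2 - p = -q" using p by (auto simp: q_def)
    have "q * k powr (-q - 1) * (3 / 4) \<le> q * k powr (-q - 1) * (k - a)"
      using gap q by (intro mult_left_mono) auto
    then have "k powr (1 - p) \<le> c * (a powr (2 - p) - k powr (2 - p))"
      using neg_powr_tangent_bound[OF a0 ak q] q unfolding exps c_def q_def[symmetric]
      by (simp add: field_simps)
    moreover have "\<psi> n = a powr (2 - p)" "\<psi> (Suc n) = k powr (2 - p)"
      using yk y1 by (auto simp: \<psi>_def a_def k_def)
    moreover have "\<bar>trunc_at (Suc n) x\<bar> powr p \<le> y powr p"
      using p by (auto simp: trunc_at_def y_def intro!: powr_mono2)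
    ultimately have "k powr (1 - p) * \<bar>trunc_at (Suc n) x\<bar> powr p \<le> c * (\<psi> n - \<psi> (Suc n)) * y powr p"
      using c0 antitone by (intro mult_mono) auto
    then show ?thesis by (simp add: k_def c_def mult_ac)
  qed
qed

text \<open>Summing the telescoping bounds: the whole series is \<open>O(1 + x\<^sup>2)\<close>.  This is where
  the hypothesis \<open>E X\<^sup>2 < \<infinity>\<close> enters.\<close>
lemma trunc_tail_series_bound:
  fixes x p :: real
  assumes p: "p > 2"
  shows "(\<Sum>n. ennreal (real (Suc n) powr (1 - p) * \<bar>trunc_at (Suc n) x\<bar> powr p))
           \<le> ennreal (4 / (3 * (p - 2)) * 4 powr (p - 2) * (1 + x\<^sup>2))"
proof -
  define y where "y = max \<bar>x\<bar> 1"
  define \<psi> where "\<psi> j = max (real j) (y / 4) powr (2 - p)" for j :: nat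
  define c where "c = 4 / (3 * (p - 2))"
  have y1: "y \<ge> 1" and c0: "c > 0" using p by (auto simp: y_def c_def)
  have antitone: "\<psi> (Suc n) \<le> \<psi> n" for n
    unfolding \<psi>_def using p y1 by (intro powr_mono2') auto
  have "filterlim (\<lambda>j::nat. max (real j) (y / 4)) at_top sequentially"
    by (rule filterlim_at_top_mono[OF filterlim_real_sequentially]) auto
  then have "\<psi> \<longlonglongrightarrow> 0"
    unfolding \<psi>_def using p by (intro tendsto_neg_powr) auto
  then have telescope: "(\<lambda>n. c * y powr p * (\<psi> n - \<psi> (Suc n))) sums (c * y powr p * \<psi> 0)"
    using sums_mult[OF telescope_sums', of \<psi> 0 "c * y powr p"] by simp
  have "(\<Sum>n. ennreal (real (Suc n) powr (1 - p) * \<bar>trunc_at (Suc n) x\<bar> powr p))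
      \<le> (\<Sum>n. ennreal (c * y powr p * (\<psi> n - \<psi> (Suc n))))"
    using trunc_tail_term_bound[OF p]
    by (intro suminf_le summableI ennreal_leI) (simp add: y_def \<psi>_def c_def)
  also have "\<dots> = ennreal (c * y powr p * \<psi> 0)"
    using antitone c0 by (intro suminf_ennreal_eq telescope) auto
  also have "c * y powr p * \<psi> 0 = c * 4 powr (p - 2) * y\<^sup>2"
    using y1 by (simp add: \<psi>_def powr_divide powr_minus_divide powr_add[symmetric] field_simps)
  also have "ennreal \<dots> \<le> ennreal (c * 4 powr (p - 2) * (1 + x\<^sup>2))"
  proof -
    have "y\<^sup>2 \<le> 1 + x\<^sup>2"
      unfolding y_def by (cases "\<bar>x\<bar> \<le> 1") (auto simp: max_def abs_le_square_iff[symmetric] power2_abs)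
    then show ?thesis using c0 by (intro ennreal_leI mult_left_mono) auto
  qed
  finally show ?thesis by (simp add: c_def)
qed

lemma trunc_at_measurable[measurable]: "trunc_at k \<in> borel_measurable borel"
  unfolding trunc_at_def[abs_def] by measurable

lemma centered_trunc_sum_measurable:
  assumes "\<And>i. 1 \<le> i \<Longrightarrow> i \<le> k \<Longrightarrow> Xa i k \<in> borel_measurable M"
  shows "centered_trunc_sum M Xa k \<in> borel_measurable M"
  unfolding centered_trunc_sum_def[abs_def]
  by (intro borel_measurable_sum borel_measurable_diff borel_measurable_const
      measurable_compose[OF assms trunc_at_measurable]) auto

lemma integral_comp_identically_distributed:
  fixes Z :: "'a \<Rightarrow> real" and X :: "'b \<Rightarrow> real" and f :: "real \<Rightarrow> real"
  assumes "Z \<in> borel_measurable M" "X \<in> borel_measurable N"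
    and "distr M borel Z = distr N borel X" and "f \<in> borel_measurable borel"
  shows "(\<integral>\<omega>. f (Z \<omega>) \<partial>M) = (\<integral>x. f (X x) \<partial>N)"
  using assms by (metis integral_distr)

lemma (in prob_space) centred_moments:
  fixes Z :: "'a \<Rightarrow> real" and B s2 p :: real
  assumes Z[measurable]: "Z \<in> borel_measurable M" and ZB: "\<And>\<omega>. \<omega> \<in> space M \<Longrightarrow> \<bar>Z \<omega>\<bar> \<le> B"
    and s2: "expectation (\<lambda>\<omega>. (Z \<omega>)\<^sup>2) \<le> s2" and p: "p \<ge> 0"
  shows "expectation (\<lambda>\<omega>. (Z \<omega> - expectation Z)\<^sup>2) \<le> s2"
    and "expectation (\<lambda>\<omega>. \<bar>Z \<omega> - expectation Z\<bar> powr p)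
           \<le> 2 powr p * (expectation (\<lambda>\<omega>. \<bar>Z \<omega>\<bar> powr p) + s2 powr (p / 2))"
proof -
  note bounded_comp = integrable_bounded_comp[OF Z ZB]
  have int_Z: "integrable M Z" using bounded_comp[of "\<lambda>y. y" B] by simp
  have int_Z2: "integrable M (\<lambda>\<omega>. (Z \<omega>)\<^sup>2)"
    by (rule bounded_comp[of _ "B\<^sup>2"]) (auto simp: abs_le_square_iff[symmetric] intro: order_trans[OF _ abs_ge_self])
  have int_Zp: "integrable M (\<lambda>\<omega>. \<bar>Z \<omega>\<bar> powr p)"
    by (rule bounded_comp[of _ "B powr p"]) (use p in \<open>auto intro!: powr_mono2\<close>)
  have int_Zmp: "integrable M (\<lambda>\<omega>. \<bar>Z \<omega> - expectation Z\<bar> powr p)"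
    by (rule bounded_comp[of _ "(B + \<bar>expectation Z\<bar>) powr p"]) (use p in \<open>auto intro!: powr_mono2\<close>)
  have variance: "expectation (\<lambda>\<omega>. (Z \<omega> - expectation Z)\<^sup>2)
      = expectation (\<lambda>\<omega>. (Z \<omega>)\<^sup>2) - (expectation Z)\<^sup>2"
    using variance_eq[OF int_Z int_Z2] .
  then show "expectation (\<lambda>\<omega>. (Z \<omega> - expectation Z)\<^sup>2) \<le> s2"
    using s2 by (smt (verit) zero_le_power2)
  have "(expectation Z)\<^sup>2 \<le> s2" using variance s2 variance_positive[of Z] by linarith
  then have "(\<bar>expectation Z\<bar> powr 2) powr (p / 2) \<le> s2 powr (p / 2)"
    using p by (intro powr_mono2) auto
  then have mean: "\<bar>expectation Z\<bar> powr p \<le> s2 powr (p / 2)"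
    unfolding powr_powr by simp
  have "expectation (\<lambda>\<omega>. \<bar>Z \<omega> - expectation Z\<bar> powr p)
      \<le> expectation (\<lambda>\<omega>. 2 powr p * (\<bar>Z \<omega>\<bar> powr p + \<bar>expectation Z\<bar> powr p))"
    using int_Zmp int_Zp p by (intro integral_mono abs_diff_powr_le) auto
  also have "\<dots> = 2 powr p * (expectation (\<lambda>\<omega>. \<bar>Z \<omega>\<bar> powr p) + \<bar>expectation Z\<bar> powr p)"
    using int_Zp by (simp add: prob_space)
  also have "\<dots> \<le> 2 powr p * (expectation (\<lambda>\<omega>. \<bar>Z \<omega>\<bar> powr p) + s2 powr (p / 2))"
    using mean by (intro mult_left_mono) auto
  finally show "expectation (\<lambda>\<omega>. \<bar>Z \<omega> - expectation Z\<bar> powr p)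
      \<le> 2 powr p * (expectation (\<lambda>\<omega>. \<bar>Z \<omega>\<bar> powr p) + s2 powr (p / 2))" .
qed

lemma (in prob_space) centred_truncation_moments:
  fixes X :: "'a \<Rightarrow> real" and p :: real and k :: nat
  assumes X[measurable]: "X \<in> borel_measurable M" and X2: "integrable M (\<lambda>x. (X x)\<^sup>2)"
    and p: "p \<ge> 0"
  defines "m \<equiv> expectation (\<lambda>x. trunc_at k (X x))"
  shows "expectation (\<lambda>x. trunc_at k (X x) - m) = 0"
    and "expectation (\<lambda>x. (trunc_at k (X x) - m)\<^sup>2) \<le> expectation (\<lambda>x. (X x)\<^sup>2)"
    and "expectation (\<lambda>x. \<bar>trunc_at k (X x) - m\<bar> powr p)
           \<le> 2 powr p * (expectation (\<lambda>x. \<bar>trunc_at k (X x)\<bar> powr p)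
                         + expectation (\<lambda>x. (X x)\<^sup>2) powr (p / 2))"
proof -
  have bound: "\<bar>trunc_at k y\<bar> \<le> real k" for y by (simp add: trunc_at_def)
  have "integrable M (\<lambda>x. trunc_at k (X x))"
    by (rule integrable_const_bound[where B = "real k"]) (auto simp: bound)
  then show "expectation (\<lambda>x. trunc_at k (X x) - m) = 0" by (simp add: m_def prob_space)
  have "integrable M (\<lambda>x. (trunc_at k (X x))\<^sup>2)"
    by (rule integrable_const_bound[where B = "real k ^ 2"])
       (auto simp: trunc_at_def abs_le_square_iff[symmetric])
  then have second: "expectation (\<lambda>x. (trunc_at k (X x))\<^sup>2) \<le> expectation (\<lambda>x. (X x)\<^sup>2)"
    using X2 by (intro integral_mono) (auto simp: trunc_at_def)
  show "expectation (\<lambda>x. (trunc_at k (X x) - m)\<^sup>2) \<le> expectation (\<lambda>x. (X x)\<^sup>2)"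
    unfolding m_def by (rule centred_moments(1)[where B = "real k", OF _ _ second p]) (auto simp: bound)
  show "expectation (\<lambda>x. \<bar>trunc_at k (X x) - m\<bar> powr p)
      \<le> 2 powr p * (expectation (\<lambda>x. \<bar>trunc_at k (X x)\<bar> powr p) + expectation (\<lambda>x. (X x)\<^sup>2) powr (p / 2))"
    unfolding m_def by (rule centred_moments(2)[where B = "real k", OF _ _ second p]) (auto simp: bound)
qed

lemma indep_partial_row_sum:
  fixes Xa :: "nat \<Rightarrow> nat \<Rightarrow> 'a \<Rightarrow> real" and g :: "real \<Rightarrow> real"
  assumes "prob_space M"
    and indep: "prob_space.indep_vars M (\<lambda>_. borel) (\<lambda>(i, k). Xa i k) {(i, k). 1 \<le> i \<and> i \<le> k}"
    and g: "g \<in> borel_measurable borel" and jk: "j < k"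
  shows "prob_space.indep_var M borel (\<lambda>\<omega>. \<Sum>i<j. g (Xa (Suc i) k \<omega>)) borel (\<lambda>\<omega>. g (Xa (Suc j) k \<omega>))"
proof -
  interpret prob_space M by fact
  define A where "A = (\<lambda>i. (Suc i, k)) ` {..<j}"
  define B where "B = {(Suc j, k)}"
  define Z where "Z = (\<lambda>(i, k). Xa i k)"
  have I: "indep_var (PiM A (\<lambda>_. borel)) (\<lambda>\<omega>. restrict (\<lambda>ik. Z ik \<omega>) A)
      (PiM B (\<lambda>_. borel)) (\<lambda>\<omega>. restrict (\<lambda>ik. Z ik \<omega>) B)"
    by (rule indep_var_restrict[OF indep[folded Z_def]]) (use jk in \<open>auto simp: A_def B_def\<close>)
  have "(\<lambda>f. \<Sum>i<j. g (f (Suc i, k))) \<in> borel_measurable (PiM A (\<lambda>_. borel))"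
  proof (intro borel_measurable_sum)
    fix i assume "i \<in> {..<j}"
    then have "(Suc i, k) \<in> A" by (auto simp: A_def)
    then show "(\<lambda>f. g (f (Suc i, k))) \<in> borel_measurable (PiM A (\<lambda>_. borel))"
      by (rule measurable_compose[OF measurable_component_singleton[of _ A "\<lambda>_. borel"] g])
  qed
  moreover have "(\<lambda>f. g (f (Suc j, k))) \<in> borel_measurable (PiM B (\<lambda>_. borel))"
    by (rule measurable_compose[OF measurable_component_singleton[of _ B "\<lambda>_. borel"] g]) (simp add: B_def)
  ultimately have "indep_var borel ((\<lambda>f. \<Sum>i<j. g (f (Suc i, k))) \<circ> (\<lambda>\<omega>. restrict (\<lambda>ik. Z ik \<omega>) A))
      borel ((\<lambda>f. g (f (Suc j, k))) \<circ> (\<lambda>\<omega>. restrict (\<lambda>ik. Z ik \<omega>) B))"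
    by (rule indep_var_compose[OF I])
  then show ?thesis by (simp add: comp_def A_def B_def Z_def)
qed

lemma (in prob_space) nn_integral_normalised_moment_le:
  fixes T :: "'a \<Rightarrow> real" and C k p K s mu :: real
  assumes T: "T \<in> borel_measurable M" "\<And>\<omega>. \<omega> \<in> space M \<Longrightarrow> \<bar>T \<omega>\<bar> \<le> C"
    and k: "k > 0" and p: "p \<ge> 0"
    and moment: "expectation (\<lambda>\<omega>. \<bar>T \<omega>\<bar> powr p) \<le> K * (k powr (p / 2) * s + k * mu)"
  shows "(\<integral>\<^sup>+ \<omega>. ennreal ((\<bar>T \<omega>\<bar> / k) powr p) \<partial>M)
           \<le> ennreal (K * (k powr (-(p / 2)) * s + k powr (1 - p) * mu))"
proof -
  have scale: "(\<bar>T \<omega>\<bar> / k) powr p = k powr (-p) * \<bar>T \<omega>\<bar> powr p" for \<omega>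
    unfolding powr_divide powr_minus by (simp add: divide_inverse)
  have "integrable M (\<lambda>\<omega>. \<bar>T \<omega>\<bar> powr p)"
    using T p by (intro integrable_const_bound[where B = "C powr p"]) (auto intro!: powr_mono2)
  then have "(\<integral>\<^sup>+ \<omega>. ennreal ((\<bar>T \<omega>\<bar> / k) powr p) \<partial>M)
      = ennreal (k powr (-p) * expectation (\<lambda>\<omega>. \<bar>T \<omega>\<bar> powr p))"
    unfolding scale by (subst nn_integral_eq_integral) auto
  also have "\<dots> \<le> ennreal (k powr (-p) * (K * (k powr (p / 2) * s + k * mu)))"
    using moment by (intro ennreal_leI mult_left_mono) auto
  also have "k powr (-p) * (K * (k powr (p / 2) * s + k * mu))
      = K * (k powr (-(p / 2)) * s + k powr (1 - p) * mu)"
    using powr_diff_one_mult[of k "1 - p"] k by (simp add: algebra_simps powr_add[symmetric])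
  finally show ?thesis .
qed

text \<open>The bound for a single row: the summands of the centred truncated row sum are
  independent copies of \<open>trunc_at k X - E (trunc_at k X)\<close>, so
  \<open>centred_truncation_moments\<close> and \<open>rosenthal_bounded\<close> apply with \<open>s2 = E X\<^sup>2\<close>.\<close>
lemma row_moment_bound:
  fixes M :: "'a measure" and N :: "'b measure"
    and X :: "'b \<Rightarrow> real" and Xa :: "nat \<Rightarrow> nat \<Rightarrow> 'a \<Rightarrow> real" and p :: real and k :: nat
  assumes "prob_space M" and "prob_space N"
    and X[measurable]: "X \<in> borel_measurable N"
    and X2: "integrable N (\<lambda>x. (X x)\<^sup>2)"
    and indep: "prob_space.indep_vars M (\<lambda>_. borel) (\<lambda>(i, k). Xa i k) {(i, k). 1 \<le> i \<and> i \<le> k}"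
    and distr: "\<And>i k. 1 \<le> i \<Longrightarrow> i \<le> k \<Longrightarrow> distr M borel (Xa i k) = distr N borel X"
    and p: "p > 2" and k: "k > 0"
  shows "(\<integral>\<^sup>+ \<omega>. ennreal ((\<bar>centered_trunc_sum M Xa k \<omega>\<bar> / real k) powr p) \<partial>M)
     \<le> ennreal (expansion_const p * exp (expansion_const p) *
          (real k powr (-(p / 2)) * (\<integral>x. (X x)\<^sup>2 \<partial>N) powr (p / 2)
           + real k powr (1 - p) * (2 powr p * ((\<integral>x. \<bar>trunc_at k (X x)\<bar> powr p \<partial>N)
                                                + (\<integral>x. (X x)\<^sup>2 \<partial>N) powr (p / 2)))))"
proof -
  interpret M: prob_space M by fact
  interpret N: prob_space N by fact
  have Xa[measurable]: "Xa i k \<in> borel_measurable M" if "1 \<le> i" "i \<le> k" for i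
    using indep that unfolding M.indep_vars_def by auto
  define t where "t = trunc_at k"
  define m where "m = (\<integral>x. t (X x) \<partial>N)"
  define s2 where "s2 = (\<integral>x. (X x)\<^sup>2 \<partial>N)"
  define mu where "mu = 2 powr p * ((\<integral>x. \<bar>t (X x)\<bar> powr p \<partial>N) + s2 powr (p / 2))"
  define K where "K = expansion_const p * exp (expansion_const p)"
  define Y where "Y = (\<lambda>i \<omega>. t (Xa (Suc i) k \<omega>) - m)"
  have t[measurable]: "t \<in> borel_measurable borel" unfolding t_def by simp
  have t_bound: "\<bar>t x\<bar> \<le> real k" for x by (simp add: t_def trunc_at_def)
  have transfer: "(\<integral>\<omega>. f (Xa i k \<omega>) \<partial>M) = (\<integral>x. f (X x) \<partial>N)"
    if "f \<in> borel_measurable borel" "1 \<le> i" "i \<le> k" for f :: "real \<Rightarrow> real" and i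
    using that by (intro integral_comp_identically_distributed[where Z = "Xa i k" and f = f] distr) auto
  have row_sum: "centered_trunc_sum M Xa k \<omega> = (\<Sum>i<k. Y i \<omega>)" for \<omega>
  proof -
    have "centered_trunc_sum M Xa k \<omega> = (\<Sum>i\<in>{Suc 0..k}. t (Xa i k \<omega>) - m)"
      unfolding centered_trunc_sum_def
      by (intro sum.cong refl) (auto simp: m_def t_def[symmetric] transfer[OF t])
    also have "\<dots> = (\<Sum>i<k. Y i \<omega>)" unfolding sum.atLeast1_atMost_eq Y_def ..
    finally show ?thesis .
  qed
  have Y_moments: "M.expectation (Y i) = 0" "M.expectation (\<lambda>\<omega>. (Y i \<omega>)\<^sup>2) \<le> s2"
      "M.expectation (\<lambda>\<omega>. \<bar>Y i \<omega>\<bar> powr p) \<le> mu" if "i < k" for i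
    using that N.centred_truncation_moments[OF X X2, of p k] p transfer[of "\<lambda>x. t x - m" "Suc i"]
      transfer[of "\<lambda>x. (t x - m)\<^sup>2" "Suc i"] transfer[of "\<lambda>x. \<bar>t x - m\<bar> powr p" "Suc i"]
    by (auto simp: Y_def mu_def m_def s2_def t_def)
  have Y_bound: "\<bar>Y i \<omega>\<bar> \<le> real k + \<bar>m\<bar>" for i \<omega>
    using t_bound[of "Xa (Suc i) k \<omega>"] by (simp add: Y_def)
  have rosenthal: "M.expectation (\<lambda>\<omega>. \<bar>\<Sum>i<k. Y i \<omega>\<bar> powr p)
          \<le> K * (real k powr (p / 2) * s2 powr (p / 2) + real k * mu)"
    unfolding K_def
  proof (rule M.rosenthal_bounded[OF p k _ Y_bound])
    show "M.indep_var borel (\<lambda>\<omega>. \<Sum>i<j. Y i \<omega>) borel (Y j)" if "j < k" for j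
      using indep_partial_row_sum[OF \<open>prob_space M\<close> indep _ that, of "\<lambda>x. t x - m"]
      by (simp add: Y_def)
  qed (use Y_moments in \<open>auto simp: Y_def\<close>)
  have sum_bound: "\<bar>\<Sum>i<k. Y i \<omega>\<bar> \<le> real k * (real k + \<bar>m\<bar>)" for \<omega>
  proof -
    have "\<bar>\<Sum>i<k. Y i \<omega>\<bar> \<le> (\<Sum>i<k. \<bar>Y i \<omega>\<bar>)" by (rule sum_abs)
    also have "\<dots> \<le> (\<Sum>i<k. real k + \<bar>m\<bar>)" using Y_bound by (intro sum_mono) auto
    finally show ?thesis by simp
  qed
  have "(\<integral>\<^sup>+ \<omega>. ennreal ((\<bar>centered_trunc_sum M Xa k \<omega>\<bar> / real k) powr p) \<partial>M)
      \<le> ennreal (K * (real k powr (-(p / 2)) * s2 powr (p / 2) + real k powr (1 - p) * mu))"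
    unfolding row_sum using k p sum_bound rosenthal
    by (intro M.nn_integral_normalised_moment_le) (auto simp: Y_def)
  then show ?thesis unfolding K_def s2_def mu_def t_def .
qed

lemma summable_Suc_powr: "s < -1 \<Longrightarrow> summable (\<lambda>n. real (Suc n) powr s)"
  using summable_real_powr_iff[of s] summable_Suc_iff[of "\<lambda>n. real n powr s"] by simp

text \<open>The truncated \<open>p\<close>-th moments grow slowly enough to be summable against the
  weights \<open>k powr (1 - p)\<close>: integrate \<open>trunc_tail_series_bound\<close> against the law of \<open>X\<close>.\<close>
lemma truncated_moment_series_summable:
  fixes N :: "'b measure" and X :: "'b \<Rightarrow> real" and p :: real
  assumes "prob_space N" and X[measurable]: "X \<in> borel_measurable N"
    and X2: "integrable N (\<lambda>x. (X x)\<^sup>2)" and p: "p > 2"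
  shows "summable (\<lambda>n. real (Suc n) powr (1 - p) * (\<integral>x. \<bar>trunc_at (Suc n) (X x)\<bar> powr p \<partial>N))"
proof -
  interpret N: prob_space N by fact
  define C where "C = 4 / (3 * (p - 2)) * 4 powr (p - 2)"
  define g where "g = (\<lambda>n x. real (Suc n) powr (1 - p) * \<bar>trunc_at (Suc n) (X x)\<bar> powr p)"
  have C: "C \<ge> 0" using p by (simp add: C_def)
  have moment_term: "ennreal (real (Suc n) powr (1 - p) * (\<integral>x. \<bar>trunc_at (Suc n) (X x)\<bar> powr p \<partial>N))
      = (\<integral>\<^sup>+ x. ennreal (g n x) \<partial>N)" for n
  proof -
    have "integrable N (g n)"
      unfolding g_def using p
      by (intro integrable_mult_right N.integrable_const_bound[where B = "real (Suc n) powr p"])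
         (auto intro!: powr_mono2 simp: trunc_at_def)
    then show ?thesis by (subst nn_integral_eq_integral) (auto simp: g_def)
  qed
  have "(\<Sum>n. ennreal (real (Suc n) powr (1 - p) * (\<integral>x. \<bar>trunc_at (Suc n) (X x)\<bar> powr p \<partial>N)))
      = (\<integral>\<^sup>+ x. (\<Sum>n. ennreal (g n x)) \<partial>N)"
    unfolding moment_term by (rule nn_integral_suminf[symmetric]) (simp add: g_def)
  also have "\<dots> \<le> (\<integral>\<^sup>+ x. ennreal (C * (1 + (X x)\<^sup>2)) \<partial>N)"
    using trunc_tail_series_bound[OF p] by (intro nn_integral_mono) (simp add: g_def C_def)
  also have "\<dots> = ennreal (\<integral>x. C * (1 + (X x)\<^sup>2) \<partial>N)"
    using X2 C by (intro nn_integral_eq_integral) auto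
  finally have "(\<Sum>n. ennreal (real (Suc n) powr (1 - p) * (\<integral>x. \<bar>trunc_at (Suc n) (X x)\<bar> powr p \<partial>N))) \<noteq> \<top>"
    by (rule neq_top_trans[OF ennreal_neq_top])
  then show ?thesis
    by (rule summable_suminf_not_top[rotated]) (auto intro!: integral_nonneg_AE)
qed

lemma row_bound_summable:
  fixes N :: "'b measure" and X :: "'b \<Rightarrow> real" and p K s :: real
  assumes "prob_space N" and "X \<in> borel_measurable N"
    and "integrable N (\<lambda>x. (X x)\<^sup>2)" and p: "p > 2"
  shows "summable (\<lambda>n. K * (real (Suc n) powr (-(p / 2)) * s + real (Suc n) powr (1 - p)
           * (2 powr p * ((\<integral>x. \<bar>trunc_at (Suc n) (X x)\<bar> powr p \<partial>N) + s))))"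
proof -
  define c where "c n = real (Suc n) powr (1 - p) * (\<integral>x. \<bar>trunc_at (Suc n) (X x)\<bar> powr p \<partial>N)" for n
  have "summable (\<lambda>n. K * s * real (Suc n) powr (-(p / 2))
          + K * 2 powr p * s * real (Suc n) powr (1 - p) + K * 2 powr p * c n)"
    using p by (intro summable_add summable_mult summable_Suc_powr
        truncated_moment_series_summable[OF assms, folded c_def]) auto
  moreover have "K * s * real (Suc n) powr (-(p / 2)) + K * 2 powr p * s * real (Suc n) powr (1 - p)
      + K * 2 powr p * c n = K * (real (Suc n) powr (-(p / 2)) * s + real (Suc n) powr (1 - p)
           * (2 powr p * ((\<integral>x. \<bar>trunc_at (Suc n) (X x)\<bar> powr p \<partial>N) + s)))" for n
    unfolding c_def by (simp only: distrib_left distrib_right mult_ac)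
  ultimately show ?thesis by simp
qed

theorem mainTheorem6:
  fixes M :: "'a measure" and N :: "'b measure"
    and X :: "'b \<Rightarrow> real" and Xa :: "nat \<Rightarrow> nat \<Rightarrow> 'a \<Rightarrow> real" and p :: real
  assumes "prob_space M" and "prob_space N"
    and "X \<in> borel_measurable N"
    and "integrable N (\<lambda>x. (X x)\<^sup>2)"
    and "prob_space.indep_vars M (\<lambda>_. borel) (\<lambda>(i, k). Xa i k) {(i, k). 1 \<le> i \<and> i \<le> k}"
    and "\<And>i k. 1 \<le> i \<Longrightarrow> i \<le> k \<Longrightarrow> distr M borel (Xa i k) = distr N borel X"
    and "p > 2"
  shows "(\<integral>\<^sup>+ \<omega>. (\<Sum>n. ennreal ((\<bar>centered_trunc_sum M Xa (Suc n) \<omega>\<bar> / real (Suc n)) powr p)) \<partial>M) < \<infinity>"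
proof -
  interpret M: prob_space M by fact
  define b where "b n = expansion_const p * exp (expansion_const p) *
      (real (Suc n) powr (-(p / 2)) * (\<integral>x. (X x)\<^sup>2 \<partial>N) powr (p / 2)
       + real (Suc n) powr (1 - p) * (2 powr p * ((\<integral>x. \<bar>trunc_at (Suc n) (X x)\<bar> powr p \<partial>N)
                                                  + (\<integral>x. (X x)\<^sup>2 \<partial>N) powr (p / 2))))" for n
  have [measurable]: "centered_trunc_sum M Xa k \<in> borel_measurable M" for k
    by (rule centered_trunc_sum_measurable) (use assms(5) in \<open>auto simp: M.indep_vars_def\<close>)
  have row: "(\<integral>\<^sup>+ \<omega>. ennreal ((\<bar>centered_trunc_sum M Xa (Suc n) \<omega>\<bar> / real (Suc n)) powr p) \<partial>M)
      \<le> ennreal (b n)" for n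
    unfolding b_def using row_moment_bound[OF assms(1-7), of "Suc n"] by simp
  have "summable b" unfolding b_def by (rule row_bound_summable[OF assms(2-4,7)])
  moreover have "b n \<ge> 0" for n
    unfolding b_def using assms(7)
    by (auto intro!: mult_nonneg_nonneg add_nonneg_nonneg expansion_const_nonneg integral_nonneg_AE)
  ultimately have finite: "(\<Sum>n. ennreal (b n)) < \<infinity>"
    by (simp add: less_top ennreal_suminf_neq_top)
  have "(\<integral>\<^sup>+ \<omega>. (\<Sum>n. ennreal ((\<bar>centered_trunc_sum M Xa (Suc n) \<omega>\<bar> / real (Suc n)) powr p)) \<partial>M)
      = (\<Sum>n. \<integral>\<^sup>+ \<omega>. ennreal ((\<bar>centered_trunc_sum M Xa (Suc n) \<omega>\<bar> / real (Suc n)) powr p) \<partial>M)"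
    by (rule nn_integral_suminf) measurable
  also have "\<dots> \<le> (\<Sum>n. ennreal (b n))" by (intro suminf_le summableI row)
  finally show ?thesis using finite by (rule le_less_trans)
qed

end
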